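(* Let $S$ be the set of all sequents and $M,\mathbb{B}_S,m$ as in the context. For each formula $A$ put $V(A):=(m(A\Rightarrow),\,M(\Rightarrow A))$. Then for every formula $A$, $m(A\Rightarrow)$ and $M(\Rightarrow A)$ belong to $\mathbb{B}_S$ and $m(A\Rightarrow)\subseteq M(\Rightarrow A)$, and $V$ is a semi ${\tt D}\mathbb{B}_S$-valuation.
   Context: ${\sf G}^{1}{\sf LC}^{cf}$ is the cut-free second-order sequent calculus (language without relation or function symbols; sequents $\Gamma\Rightarrow\Delta$ are pairs of finite sets of formulas; initial sequents $A,\Gamma\Rightarrow\Delta,A$ for atomic $A$; rules $(L\lnot)$ $\lnot F,\Gamma\Rightarrow\Delta,F$ / $\lnot F,\Gamma\Rightarrow\Delta$; $(R\lnot)$ $F,\Gamma\Rightarrow\Delta,\lnot F$ / $\Gamma\Rightarrow\Delta,\lnot F$; rules for $\lor,\land$ and first/second-order quantifiers in which the major formula is kept in the premise, with eigenvariables not in the conclusion for $(L\exists),(R\forall)$ and arbitrary terms $t$ / abstracts $T=\lambda\vec x.G$ as instances for $(R\exists),(L\forall)$). $Tm_0$, $Tm_1^{(n)}$: first-order terms and $n$-ary abstracts. For sequents, $M(\Gamma\Rightarrow\Delta):=\{(\Lambda\Rightarrow\Theta)\in S:{\sf G}^{1}{\sf LC}^{cf}\vdash\Gamma,\Lambda\Rightarrow\Delta,\Theta\}$; this $M:S\to\mathcal{P}(S)$ satisfies $x\in M(x)\iff M(x)=S$ and $x\in M(y)\iff y\in M(x)$. $\mathbb{B}_S:=\{\alpha\subseteq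 S:\alpha=\bigcap\{M(x):\alpha\subseteq M(x)\}\}$ (with $\bigcap\emptyset=S$), a complete Boolean algebra under inclusion with meets $\bigcap$, joins $\sup_\lambda\alpha_\lambda=\bigcap\{\gamma\in\mathbb{B}_S:\bigcup_\lambda\alpha_\lambda\subseteq\gamma\}$, and complement $-\alpha=\bigcap\{M(x):x\in\alpha\}$; $m(y):=\bigcap\{M(x):y\in M(x)\}$. For a cBa $\mathbb{B}$: ${\tt D}\mathbb{B}=\{(a,b):a\le b\}$, ${\tt a}=(\Box{\tt a},\Diamond{\tt a})$; ${\tt a}\unlhd{\tt b}$ iff $\Box{\tt a}\le\Box{\tt b}$ and $\Diamond{\tt a}\ge\Diamond{\tt b}$; $-{\tt a}=(-\Diamond{\tt a},-\Box{\tt a})$; $\sup_<,\inf_<$ componentwise. A semi ${\tt D}\mathbb{B}$-valuation is a map $V$ from formulas to ${\tt D}\mathbb{B}$ with $V(\lnot F)\unlhd-V(F)$, $V(F_0\lor F_1)\unlhd\sup_<\{V(F_0),V(F_1)\}$, $V(F_0\land F_1)\unlhd\inf_<\{V(F_0),V(F_1)\}$, $V(\exists xF(x))\unlhd\sup_<\{V(F(t)):t\in Tm_0\}$, $V(\forall xF(x))\unlhd\inf_<\{V(F(t)):t\in Tm_0\}$, $V(\exists X^nF(X))\unlhd\sup_<\{V(F(T)):T\in Tm_1^{(n)}\}$, $V(\forall X^nF(X))\unlhd\inf_<\{V(F(T)):T\in Tm_1^{(n)}\}$. *)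

theory Defs
  imports Main
begin

section \<open>Syntax: second-order language without relation or function symbols\<close>

text \<open>Locally nameless representation. First-order terms are free variables
  (named by nat) or bound variables (de Bruijn indices). Second-order variables are
  free (name, arity) or bound (de Bruijn index, separate index space).\<close>

datatype tm = FV nat | BV nat

datatype pv = PF nat nat | PB nat

datatype fm =
    FAtom pv "tm list"
  | FNeg fm
  | FOr fm fm
  | FAnd fm fm
  | FEx fm
  | FAll fm
  | FEx2 nat fm
  | FAll2 nat fm

fun tm_wf :: "nat \<Rightarrow> tm \<Rightarrow> bool" where
  "tm_wf k (FV a) = True"
| "tm_wf k (BV i) = (i < k)"

text \<open>wf k as F: F is well formed in a context of k first-order binders and
  second-order binders of arities as (innermost first).\<close>
fun wf :: "nat \<Rightarrow> nat list \<Rightarrow> fm \<Rightarrow> bool" where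
  "wf k as (FAtom (PF X n) ts) = (length ts = n \<and> (\<forall>t\<in>set ts. tm_wf k t))"
| "wf k as (FAtom (PB i) ts) = (i < length as \<and> length ts = as ! i \<and> (\<forall>t\<in>set ts. tm_wf k t))"
| "wf k as (FNeg F) = wf k as F"
| "wf k as (FOr F G) = (wf k as F \<and> wf k as G)"
| "wf k as (FAnd F G) = (wf k as F \<and> wf k as G)"
| "wf k as (FEx F) = wf (Suc k) as F"
| "wf k as (FAll F) = wf (Suc k) as F"
| "wf k as (FEx2 n F) = wf k (n # as) F"
| "wf k as (FAll2 n F) = wf k (n # as) F"

definition Fm :: "fm set" where
  "Fm = {F. wf 0 [] F}"

definition Tm0 :: "tm set" where
  "Tm0 = range FV"

text \<open>n-ary abstracts Tm_1^(n): \<lambda>x_1..x_n. G is represented by its body G, in which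
  x_(j+1) is the bound index j.\<close>
definition Abs :: "nat \<Rightarrow> fm set" where
  "Abs n = {G. wf n [] G}"

fun is_atom :: "fm \<Rightarrow> bool" where
  "is_atom (FAtom p ts) = True"
| "is_atom _ = False"

fun open_tm :: "nat \<Rightarrow> tm \<Rightarrow> tm \<Rightarrow> tm" where
  "open_tm k t (BV i) = (if i = k then t else BV i)"
| "open_tm k t (FV a) = FV a"

fun open1 :: "nat \<Rightarrow> tm \<Rightarrow> fm \<Rightarrow> fm" where
  "open1 k t (FAtom p ts) = FAtom p (map (open_tm k t) ts)"
| "open1 k t (FNeg F) = FNeg (open1 k t F)"
| "open1 k t (FOr F G) = FOr (open1 k t F) (open1 k t G)"
| "open1 k t (FAnd F G) = FAnd (open1 k t F) (open1 k t G)"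
| "open1 k t (FEx F) = FEx (open1 (Suc k) t F)"
| "open1 k t (FAll F) = FAll (open1 (Suc k) t F)"
| "open1 k t (FEx2 n F) = FEx2 n (open1 k t F)"
| "open1 k t (FAll2 n F) = FAll2 n (open1 k t F)"

text \<open>Plugging terms ts into the body of an abstract (d = number of first-order
  binders passed inside the body).\<close>
fun shift_tm :: "nat \<Rightarrow> tm \<Rightarrow> tm" where
  "shift_tm d (BV j) = BV (j + d)"
| "shift_tm d (FV a) = FV a"

fun inst_tm :: "nat \<Rightarrow> tm list \<Rightarrow> tm \<Rightarrow> tm" where
  "inst_tm d ts (BV i) =
     (if d \<le> i \<and> i < d + length ts then shift_tm d (ts ! (i - d)) else BV i)"
| "inst_tm d ts (FV a) = FV a"

fun inst :: "nat \<Rightarrow> tm list \<Rightarrow> fm \<Rightarrow> fm" where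
  "inst d ts (FAtom p us) = FAtom p (map (inst_tm d ts) us)"
| "inst d ts (FNeg F) = FNeg (inst d ts F)"
| "inst d ts (FOr F G) = FOr (inst d ts F) (inst d ts G)"
| "inst d ts (FAnd F G) = FAnd (inst d ts F) (inst d ts G)"
| "inst d ts (FEx F) = FEx (inst (Suc d) ts F)"
| "inst d ts (FAll F) = FAll (inst (Suc d) ts F)"
| "inst d ts (FEx2 n F) = FEx2 n (inst d ts F)"
| "inst d ts (FAll2 n F) = FAll2 n (inst d ts F)"

fun open2 :: "nat \<Rightarrow> fm \<Rightarrow> fm \<Rightarrow> fm" where
  "open2 k G (FAtom (PB i) ts) = (if i = k then inst 0 ts G else FAtom (PB i) ts)"
| "open2 k G (FAtom (PF X n) ts) = FAtom (PF X n) ts"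
| "open2 k G (FNeg F) = FNeg (open2 k G F)"
| "open2 k G (FOr F H) = FOr (open2 k G F) (open2 k G H)"
| "open2 k G (FAnd F H) = FAnd (open2 k G F) (open2 k G H)"
| "open2 k G (FEx F) = FEx (open2 k G F)"
| "open2 k G (FAll F) = FAll (open2 k G F)"
| "open2 k G (FEx2 n F) = FEx2 n (open2 (Suc k) G F)"
| "open2 k G (FAll2 n F) = FAll2 n (open2 (Suc k) G F)"

definition pvar_abs :: "nat \<Rightarrow> nat \<Rightarrow> fm" where
  "pvar_abs X n = FAtom (PF X n) (map BV [0..<n])"

fun fv_tm :: "tm \<Rightarrow> nat set" where
  "fv_tm (FV a) = {a}"
| "fv_tm (BV i) = {}"

fun fv :: "fm \<Rightarrow> nat set" where
  "fv (FAtom p ts) = (\<Union>t\<in>set ts. fv_tm t)"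
| "fv (FNeg F) = fv F"
| "fv (FOr F G) = fv F \<union> fv G"
| "fv (FAnd F G) = fv F \<union> fv G"
| "fv (FEx F) = fv F"
| "fv (FAll F) = fv F"
| "fv (FEx2 n F) = fv F"
| "fv (FAll2 n F) = fv F"

fun fpv :: "fm \<Rightarrow> (nat \<times> nat) set" where
  "fpv (FAtom (PF X n) ts) = {(X, n)}"
| "fpv (FAtom (PB i) ts) = {}"
| "fpv (FNeg F) = fpv F"
| "fpv (FOr F G) = fpv F \<union> fpv G"
| "fpv (FAnd F G) = fpv F \<union> fpv G"
| "fpv (FEx F) = fpv F"
| "fpv (FAll F) = fpv F"
| "fpv (FEx2 n F) = fpv F"
| "fpv (FAll2 n F) = fpv F"

definition fvs :: "fm set \<Rightarrow> nat set" where
  "fvs A = (\<Union>F\<in>A. fv F)"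

definition fpvs :: "fm set \<Rightarrow> (nat \<times> nat) set" where
  "fpvs A = (\<Union>F\<in>A. fpv F)"

section \<open>The cut-free calculus G^1LC^cf\<close>

text \<open>deriv \<Gamma> \<Delta>: the sequent \<Gamma> \<Rightarrow> \<Delta> is derivable. The major formula is kept
  in the premises.\<close>
inductive deriv :: "fm set \<Rightarrow> fm set \<Rightarrow> bool" where
  init: "finite \<Gamma> \<Longrightarrow> finite \<Delta> \<Longrightarrow> is_atom A \<Longrightarrow> deriv (insert A \<Gamma>) (insert A \<Delta>)"
| negL: "deriv (insert (FNeg F) \<Gamma>) (insert F \<Delta>) \<Longrightarrow> deriv (insert (FNeg F) \<Gamma>) \<Delta>"
| negR: "deriv (insert F \<Gamma>) (insert (FNeg F) \<Delta>) \<Longrightarrow> deriv \<Gamma> (insert (FNeg F) \<Delta>)"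
| orL: "deriv (insert F0 (insert (FOr F0 F1) \<Gamma>)) \<Delta> \<Longrightarrow>
        deriv (insert F1 (insert (FOr F0 F1) \<Gamma>)) \<Delta> \<Longrightarrow>
        deriv (insert (FOr F0 F1) \<Gamma>) \<Delta>"
| orR0: "deriv \<Gamma> (insert F0 (insert (FOr F0 F1) \<Delta>)) \<Longrightarrow> deriv \<Gamma> (insert (FOr F0 F1) \<Delta>)"
| orR1: "deriv \<Gamma> (insert F1 (insert (FOr F0 F1) \<Delta>)) \<Longrightarrow> deriv \<Gamma> (insert (FOr F0 F1) \<Delta>)"
| andL0: "deriv (insert F0 (insert (FAnd F0 F1) \<Gamma>)) \<Delta> \<Longrightarrow> deriv (insert (FAnd F0 F1) \<Gamma>) \<Delta>"
| andL1: "deriv (insert F1 (insert (FAnd F0 F1) \<Gamma>)) \<Delta> \<Longrightarrow> deriv (insert (FAnd F0 F1) \<Gamma>) \<Delta>"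
| andR: "deriv \<Gamma> (insert F0 (insert (FAnd F0 F1) \<Delta>)) \<Longrightarrow>
         deriv \<Gamma> (insert F1 (insert (FAnd F0 F1) \<Delta>)) \<Longrightarrow>
         deriv \<Gamma> (insert (FAnd F0 F1) \<Delta>)"
| exL: "deriv (insert (open1 0 (FV a) F) (insert (FEx F) \<Gamma>)) \<Delta> \<Longrightarrow>
        a \<notin> fvs (insert (FEx F) \<Gamma> \<union> \<Delta>) \<Longrightarrow>
        deriv (insert (FEx F) \<Gamma>) \<Delta>"
| exR: "t \<in> Tm0 \<Longrightarrow> deriv \<Gamma> (insert (open1 0 t F) (insert (FEx F) \<Delta>)) \<Longrightarrow>
        deriv \<Gamma> (insert (FEx F) \<Delta>)"
| allL: "t \<in> Tm0 \<Longrightarrow> deriv (insert (open1 0 t F) (insert (FAll F) \<Gamma>)) \<Delta> \<Longrightarrow>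
         deriv (insert (FAll F) \<Gamma>) \<Delta>"
| allR: "deriv \<Gamma> (insert (open1 0 (FV a) F) (insert (FAll F) \<Delta>)) \<Longrightarrow>
         a \<notin> fvs (\<Gamma> \<union> insert (FAll F) \<Delta>) \<Longrightarrow>
         deriv \<Gamma> (insert (FAll F) \<Delta>)"
| ex2L: "deriv (insert (open2 0 (pvar_abs X n) F) (insert (FEx2 n F) \<Gamma>)) \<Delta> \<Longrightarrow>
         (X, n) \<notin> fpvs (insert (FEx2 n F) \<Gamma> \<union> \<Delta>) \<Longrightarrow>
         deriv (insert (FEx2 n F) \<Gamma>) \<Delta>"
| ex2R: "T \<in> Abs n \<Longrightarrow> deriv \<Gamma> (insert (open2 0 T F) (insert (FEx2 n F) \<Delta>)) \<Longrightarrow>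
         deriv \<Gamma> (insert (FEx2 n F) \<Delta>)"
| all2L: "T \<in> Abs n \<Longrightarrow> deriv (insert (open2 0 T F) (insert (FAll2 n F) \<Gamma>)) \<Delta> \<Longrightarrow>
          deriv (insert (FAll2 n F) \<Gamma>) \<Delta>"
| all2R: "deriv \<Gamma> (insert (open2 0 (pvar_abs X n) F) (insert (FAll2 n F) \<Delta>)) \<Longrightarrow>
          (X, n) \<notin> fpvs (\<Gamma> \<union> insert (FAll2 n F) \<Delta>) \<Longrightarrow>
          deriv \<Gamma> (insert (FAll2 n F) \<Delta>)"

type_synonym seq = "fm set \<times> fm set"

definition Seqs :: "seq set" where
  "Seqs = {(\<Gamma>, \<Delta>). finite \<Gamma> \<and> finite \<Delta> \<and> \<Gamma> \<subseteq> Fm \<and> \<Delta> \<subseteq> Fm}"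

definition seqM :: "seq \<Rightarrow> seq set" where
  "seqM x = {y \<in> Seqs. deriv (fst x \<union> fst y) (snd x \<union> snd y)}"

text \<open>Intersections relative to S (so that the empty intersection is S).\<close>
definition BS :: "seq set set" where
  "BS = {\<alpha>. \<alpha> \<subseteq> Seqs \<and> \<alpha> = Seqs \<inter> \<Inter>{seqM x |x. x \<in> Seqs \<and> \<alpha> \<subseteq> seqM x}}"

definition seqm :: "seq \<Rightarrow> seq set" where
  "seqm y = Seqs \<inter> \<Inter>{seqM x |x. x \<in> Seqs \<and> y \<in> seqM x}"

definition infB :: "seq set set \<Rightarrow> seq set" where
  "infB A = Seqs \<inter> \<Inter>A"

definition supB :: "seq set set \<Rightarrow> seq set" where
  "supB A = Seqs \<inter> \<Inter>{\<gamma> \<in> BS. \<Union>A \<subseteq> \<gamma>}"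

definition negB :: "seq set \<Rightarrow> seq set" where
  "negB \<alpha> = Seqs \<inter> \<Inter>{seqM x |x. x \<in> \<alpha>}"

definition DBS :: "(seq set \<times> seq set) set" where
  "DBS = {(a, b). a \<in> BS \<and> b \<in> BS \<and> a \<subseteq> b}"

definition dle :: "seq set \<times> seq set \<Rightarrow> seq set \<times> seq set \<Rightarrow> bool" where
  "dle a b \<longleftrightarrow> fst a \<subseteq> fst b \<and> snd b \<subseteq> snd a"

definition dneg :: "seq set \<times> seq set \<Rightarrow> seq set \<times> seq set" where
  "dneg a = (negB (snd a), negB (fst a))"

definition dsup :: "(seq set \<times> seq set) set \<Rightarrow> seq set \<times> seq set" where
  "dsup P = (supB (fst ` P), supB (snd ` P))"

definition dinf :: "(seq set \<times> seq set) set \<Rightarrow> seq set \<times> seq set" where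
  "dinf P = (infB (fst ` P), infB (snd ` P))"

definition semi_valuation :: "(fm \<Rightarrow> seq set \<times> seq set) \<Rightarrow> bool" where
  "semi_valuation V \<longleftrightarrow>
     (\<forall>A\<in>Fm. V A \<in> DBS)
   \<and> (\<forall>F. FNeg F \<in> Fm \<longrightarrow> dle (V (FNeg F)) (dneg (V F)))
   \<and> (\<forall>F0 F1. FOr F0 F1 \<in> Fm \<longrightarrow> dle (V (FOr F0 F1)) (dsup {V F0, V F1}))
   \<and> (\<forall>F0 F1. FAnd F0 F1 \<in> Fm \<longrightarrow> dle (V (FAnd F0 F1)) (dinf {V F0, V F1}))
   \<and> (\<forall>F. FEx F \<in> Fm \<longrightarrow> dle (V (FEx F)) (dsup {V (open1 0 t F) |t. t \<in> Tm0}))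
   \<and> (\<forall>F. FAll F \<in> Fm \<longrightarrow> dle (V (FAll F)) (dinf {V (open1 0 t F) |t. t \<in> Tm0}))
   \<and> (\<forall>n F. FEx2 n F \<in> Fm \<longrightarrow> dle (V (FEx2 n F)) (dsup {V (open2 0 T F) |T. T \<in> Abs n}))
   \<and> (\<forall>n F. FAll2 n F \<in> Fm \<longrightarrow> dle (V (FAll2 n F)) (dinf {V (open2 0 T F) |T. T \<in> Abs n}))"

end

theory Submission
  imports Defs "HOL-Combinatorics.Transposition"
begin

text \<open>Cut-free derivability is closed under renaming of free variables and under
  weakening, so every rule may also be used with its major formula dropped from the premise,
  and identity sequents \<open>A \<Rightarrow> A\<close> are derivable for all formulas. For \<open>x = (\<Gamma> \<Rightarrow> \<Delta>)\<close>,
  the inclusion \<open>m(A \<Rightarrow>) \<subseteq> M(x)\<close> just says that \<open>A, \<Gamma> \<Rightarrow> \<Delta>\<close> is derivable, and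
  \<open>x \<in> M(\<Rightarrow> A)\<close> that \<open>\<Gamma> \<Rightarrow> \<Delta>, A\<close> is. Hence the left rules bound \<open>m(A \<Rightarrow>)\<close> from above
  and the right rules bound \<open>M(\<Rightarrow> A)\<close> from below, which is the semi-valuation condition;
  identity gives \<open>m(A \<Rightarrow>) \<subseteq> M(\<Rightarrow> A)\<close>.\<close>

fun rename_tm :: "(nat \<Rightarrow> nat) \<Rightarrow> tm \<Rightarrow> tm" where
  "rename_tm f (FV a) = FV (f a)"
| "rename_tm f (BV i) = BV i"

fun rename_pv :: "(nat \<Rightarrow> nat \<Rightarrow> nat) \<Rightarrow> pv \<Rightarrow> pv" where
  "rename_pv g (PF X n) = PF (g n X) n"
| "rename_pv g (PB i) = PB i"

fun rename :: "(nat \<Rightarrow> nat) \<Rightarrow> (nat \<Rightarrow> nat \<Rightarrow> nat) \<Rightarrow> fm \<Rightarrow> fm" where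
  "rename f g (FAtom p ts) = FAtom (rename_pv g p) (map (rename_tm f) ts)"
| "rename f g (FNeg F) = FNeg (rename f g F)"
| "rename f g (FOr F G) = FOr (rename f g F) (rename f g G)"
| "rename f g (FAnd F G) = FAnd (rename f g F) (rename f g G)"
| "rename f g (FEx F) = FEx (rename f g F)"
| "rename f g (FAll F) = FAll (rename f g F)"
| "rename f g (FEx2 n F) = FEx2 n (rename f g F)"
| "rename f g (FAll2 n F) = FAll2 n (rename f g F)"

lemma rename_tm_open_tm: "rename_tm f (open_tm k t u) = open_tm k (rename_tm f t) (rename_tm f u)"
  by (cases u) auto

lemma rename_tm_inst_tm: "rename_tm f (inst_tm d ts u) = inst_tm d (map (rename_tm f) ts) (rename_tm f u)"
proof -
  have "rename_tm f (shift_tm d t) = shift_tm d (rename_tm f t)" for t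
    by (cases t) auto
  then show ?thesis by (cases u) auto
qed

lemma rename_open1: "rename f g (open1 k t F) = open1 k (rename_tm f t) (rename f g F)"
  by (induction F arbitrary: k) (simp_all add: rename_tm_open_tm)

lemma rename_inst: "rename f g (inst d ts G) = inst d (map (rename_tm f) ts) (rename f g G)"
  by (induction G arbitrary: d) (simp_all add: rename_tm_inst_tm)

lemma rename_open2: "rename f g (open2 k G F) = open2 k (rename f g G) (rename f g F)"
  by (induction k G F rule: open2.induct) (simp_all add: rename_inst)

lemma rename_pvar_abs: "rename f g (pvar_abs X n) = pvar_abs (g n X) n"
  by (simp add: pvar_abs_def)

lemma wf_rename [simp]: "wf k as (rename f g F) = wf k as F"
proof -
  have "tm_wf k (rename_tm f t) = tm_wf k t" for k t
    by (cases t) auto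
  then show ?thesis
    by (induction k as F rule: wf.induct) auto
qed

lemma is_atom_rename [simp]: "is_atom (rename f g F) = is_atom F"
  by (cases F) auto

lemma fv_rename: "fv (rename f g F) = f ` fv F"
proof -
  have "fv_tm (rename_tm f t) = f ` fv_tm t" for t
    by (cases t) auto
  then show ?thesis
    by (induction F) auto
qed

lemma fpv_rename: "fpv (rename f g F) = (\<lambda>(X, n). (g n X, n)) ` fpv F"
  by (induction F rule: fpv.induct) auto

lemma fvs_rename: "fvs (rename f g ` S) = f ` fvs S"
  by (auto simp: fvs_def fv_rename)

lemma fpvs_rename: "fpvs (rename f g ` S) = (\<lambda>(X, n). (g n X, n)) ` fpvs S"
  by (auto simp: fpvs_def fpv_rename)

lemma rename_cong:
  assumes "\<And>c. c \<in> fv F \<Longrightarrow> f c = f' c" and "\<And>X n. (X, n) \<in> fpv F \<Longrightarrow> g n X = g' n X"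
  shows "rename f g F = rename f' g' F"
  using assms
proof (induction F)
  case (FAtom p ts)
  have "rename_tm f t = rename_tm f' t" if "t \<in> set ts" for t
  proof -
    have "f c = f' c" if "c \<in> fv_tm t" for c
      using that \<open>t \<in> set ts\<close> FAtom.prems(1) by auto
    then show ?thesis by (cases t) auto
  qed
  moreover have "rename_pv g p = rename_pv g' p"
    using FAtom.prems(2) by (cases p) auto
  ultimately show ?case by simp
qed auto

lemma rename_id: "rename id (\<lambda>_. id) = id"
proof
  fix F
  have "rename_tm id t = t" for t
    by (cases t) auto
  moreover have "rename_pv (\<lambda>_. id) p = p" for p
    by (cases p) auto
  ultimately show "rename id (\<lambda>_. id) F = id F"
    by (induction F) (simp_all add: map_idI)
qed

lemma rename_transpose_fresh_var:
  assumes "inj f" and "a \<notin> fvs S" and "b \<notin> fvs (rename f g ` S)" and "G \<in> S"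
  shows "rename (transpose (f a) b \<circ> f) g G = rename f g G"
proof (rule rename_cong)
  fix c assume c: "c \<in> fv G"
  then have "f c \<noteq> f a" using assms(1,2,4) by (auto simp: fvs_def inj_eq)
  moreover have "c \<in> fvs S" using c assms(4) by (auto simp: fvs_def)
  then have "f c \<noteq> b" using assms(3) by (auto simp: fvs_rename)
  ultimately show "(transpose (f a) b \<circ> f) c = f c" by simp
qed simp

lemma rename_transpose_fresh_pvar:
  assumes "inj (g n)" and "(X, n) \<notin> fpvs S" and "(Y, n) \<notin> fpvs (rename f g ` S)" and "G \<in> S"
  shows "rename f (g(n := transpose (g n X) Y \<circ> g n)) G = rename f g G"
proof (rule rename_cong)
  fix Z k assume Z: "(Z, k) \<in> fpv G"
  show "(g(n := transpose (g n X) Y \<circ> g n)) k Z = g k Z"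
  proof (cases "k = n")
    case True
    then have "g n Z \<noteq> g n X" using Z assms(1,2,4) by (auto simp: fpvs_def inj_eq)
    moreover have "(Z, n) \<in> fpvs S" using Z True assms(4) by (auto simp: fpvs_def)
    then have "g n Z \<noteq> Y" using assms(3) by (force simp: fpvs_rename)
    ultimately show ?thesis using True by simp
  qed simp
qed simp

lemma finite_fvs: "finite S \<Longrightarrow> finite (fvs S)"
proof -
  have "finite (fv_tm t)" for t
    by (cases t) auto
  then have "finite (fv F)" for F
    by (induction F) auto
  then show "finite S \<Longrightarrow> finite (fvs S)"
    by (simp add: fvs_def)
qed

lemma finite_fpvs: "finite S \<Longrightarrow> finite (fpvs S)"
proof -
  have "finite (fpv F)" for F
    by (induction F rule: fpv.induct) auto
  then show "finite S \<Longrightarrow> finite (fpvs S)"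
    by (simp add: fpvs_def)
qed

lemma ex_fresh_var: "finite S \<Longrightarrow> \<exists>a. a \<notin> fvs S"
  using finite_fvs ex_new_if_finite infinite_UNIV_nat by blast

lemma ex_fresh_pvar: "finite S \<Longrightarrow> \<exists>X. (X, n) \<notin> fpvs S"
proof -
  assume "finite S"
  then have "finite (fst ` fpvs S)" by (simp add: finite_fpvs)
  then obtain X where "X \<notin> fst ` fpvs S"
    using ex_new_if_finite infinite_UNIV_nat by blast
  then show ?thesis by force
qed

lemma obtain_fresh_renaming_var:
  assumes "inj f" "finite S" "finite E" "a \<notin> fvs S"
  obtains f' where "inj f'" "f' a \<notin> fvs (rename f g ` S \<union> E)"
    "\<And>G. G \<in> S \<Longrightarrow> rename f' g G = rename f g G"
proof -
  obtain b where b: "b \<notin> fvs (rename f g ` S \<union> E)"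
    using ex_fresh_var assms(2,3) by (meson finite_Un finite_imageI)
  show thesis
  proof
    show "inj (transpose (f a) b \<circ> f)"
      using assms(1) by (simp add: inj_compose)
    show "(transpose (f a) b \<circ> f) a \<notin> fvs (rename f g ` S \<union> E)"
      using b by simp
    show "rename (transpose (f a) b \<circ> f) g G = rename f g G" if "G \<in> S" for G
      using assms(1,4) b that by (intro rename_transpose_fresh_var) (auto simp: fvs_def)
  qed
qed

lemma obtain_fresh_renaming_pvar:
  assumes "\<forall>k. inj (g k)" "finite S" "finite E" "(X, n) \<notin> fpvs S"
  obtains g' where "\<forall>k. inj (g' k)" "(g' n X, n) \<notin> fpvs (rename f g ` S \<union> E)"
    "\<And>G. G \<in> S \<Longrightarrow> rename f g' G = rename f g G"
proof -
  obtain Y where Y: "(Y, n) \<notin> fpvs (rename f g ` S \<union> E)"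
    using ex_fresh_pvar assms(2,3) by (meson finite_Un finite_imageI)
  show thesis
  proof
    show "\<forall>k. inj ((g(n := transpose (g n X) Y \<circ> g n)) k)"
      using assms(1) by (simp add: inj_compose)
    show "((g(n := transpose (g n X) Y \<circ> g n)) n X, n) \<notin> fpvs (rename f g ` S \<union> E)"
      using Y by simp
    show "rename f (g(n := transpose (g n X) Y \<circ> g n)) G = rename f g G" if "G \<in> S" for G
      using assms(1,4) Y that by (intro rename_transpose_fresh_pvar) (auto simp: fpvs_def)
  qed
qed

lemma deriv_finite: "deriv \<Gamma> \<Delta> \<Longrightarrow> finite \<Gamma> \<and> finite \<Delta>"
  by (induction rule: deriv.induct) auto

text \<open>Renaming and weakening are proved admissible together: the eigenvariable of a
  quantifier rule is renamed to one that is fresh for the added formulas.\<close>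
lemma deriv_rename_weaken:
  "deriv \<Gamma> \<Delta> \<Longrightarrow> inj f \<Longrightarrow> \<forall>n. inj (g n) \<Longrightarrow> finite \<Lambda> \<Longrightarrow> finite \<Theta> \<Longrightarrow>
    deriv (rename f g ` \<Gamma> \<union> \<Lambda>) (rename f g ` \<Delta> \<union> \<Theta>)"
proof (induction arbitrary: f g \<Lambda> \<Theta> rule: deriv.induct)
  case (init \<Gamma> \<Delta> A)
  then show ?case by (simp add: deriv.init)
next
  case (exL a F \<Gamma> \<Delta>)
  let ?S = "insert (FEx F) \<Gamma> \<union> \<Delta>"
  obtain f' where f': "inj f'" "f' a \<notin> fvs (rename f g ` ?S \<union> (\<Lambda> \<union> \<Theta>))"
    and agree: "\<And>G. G \<in> ?S \<Longrightarrow> rename f' g G = rename f g G"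
    using obtain_fresh_renaming_var[OF exL.prems(1) _ _ exL.hyps(2)] deriv_finite[OF exL.hyps(1)]
      exL.prems(3,4) by (metis finite_Un finite_insert)
  have "rename f' g F = rename f g F" "rename f' g ` \<Gamma> = rename f g ` \<Gamma>"
    "rename f' g ` \<Delta> = rename f g ` \<Delta>"
    using agree[of "FEx F"] agree by (auto intro: image_cong)
  moreover have "deriv (rename f' g ` insert (open1 0 (FV a) F) (insert (FEx F) \<Gamma>) \<union> \<Lambda>)
      (rename f' g ` \<Delta> \<union> \<Theta>)"
    using exL.IH f'(1) exL.prems(2-4) by blast
  moreover have "f' a \<notin> fvs (insert (FEx (rename f g F)) (rename f g ` \<Gamma> \<union> \<Lambda>) \<union> (rename f g ` \<Delta> \<union> \<Theta>))"
    using f'(2) by (auto simp: fvs_def)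
  ultimately show ?case by (simp add: rename_open1 deriv.exL)
next
  case (allR \<Gamma> a F \<Delta>)
  let ?S = "\<Gamma> \<union> insert (FAll F) \<Delta>"
  obtain f' where f': "inj f'" "f' a \<notin> fvs (rename f g ` ?S \<union> (\<Lambda> \<union> \<Theta>))"
    and agree: "\<And>G. G \<in> ?S \<Longrightarrow> rename f' g G = rename f g G"
    using obtain_fresh_renaming_var[OF allR.prems(1) _ _ allR.hyps(2)] deriv_finite[OF allR.hyps(1)]
      allR.prems(3,4) by (metis finite_Un finite_insert)
  have "rename f' g F = rename f g F" "rename f' g ` \<Gamma> = rename f g ` \<Gamma>"
    "rename f' g ` \<Delta> = rename f g ` \<Delta>"
    using agree[of "FAll F"] agree by (auto intro: image_cong)
  moreover have "deriv (rename f' g ` \<Gamma> \<union> \<Lambda>)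
      (rename f' g ` insert (open1 0 (FV a) F) (insert (FAll F) \<Delta>) \<union> \<Theta>)"
    using allR.IH f'(1) allR.prems(2-4) by blast
  moreover have "f' a \<notin> fvs ((rename f g ` \<Gamma> \<union> \<Lambda>) \<union> insert (FAll (rename f g F)) (rename f g ` \<Delta> \<union> \<Theta>))"
    using f'(2) by (auto simp: fvs_def)
  ultimately show ?case by (simp add: rename_open1 deriv.allR)
next
  case (ex2L X n F \<Gamma> \<Delta>)
  let ?S = "insert (FEx2 n F) \<Gamma> \<union> \<Delta>"
  obtain g' where g': "\<forall>k. inj (g' k)" "(g' n X, n) \<notin> fpvs (rename f g ` ?S \<union> (\<Lambda> \<union> \<Theta>))"
    and agree: "\<And>G. G \<in> ?S \<Longrightarrow> rename f g' G = rename f g G"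
    using obtain_fresh_renaming_pvar[OF ex2L.prems(2) _ _ ex2L.hyps(2)] deriv_finite[OF ex2L.hyps(1)]
      ex2L.prems(3,4) by (metis finite_Un finite_insert)
  have "rename f g' F = rename f g F" "rename f g' ` \<Gamma> = rename f g ` \<Gamma>"
    "rename f g' ` \<Delta> = rename f g ` \<Delta>"
    using agree[of "FEx2 n F"] agree by (auto intro: image_cong)
  moreover have "deriv (rename f g' ` insert (open2 0 (pvar_abs X n) F) (insert (FEx2 n F) \<Gamma>) \<union> \<Lambda>)
      (rename f g' ` \<Delta> \<union> \<Theta>)"
    using ex2L.IH g'(1) ex2L.prems(1,3,4) by blast
  moreover have "(g' n X, n) \<notin> fpvs (insert (FEx2 n (rename f g F)) (rename f g ` \<Gamma> \<union> \<Lambda>) \<union> (rename f g ` \<Delta> \<union> \<Theta>))"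
    using g'(2) by (auto simp: fpvs_def)
  ultimately show ?case by (simp add: rename_open2 rename_pvar_abs deriv.ex2L)
next
  case (all2R \<Gamma> X n F \<Delta>)
  let ?S = "\<Gamma> \<union> insert (FAll2 n F) \<Delta>"
  obtain g' where g': "\<forall>k. inj (g' k)" "(g' n X, n) \<notin> fpvs (rename f g ` ?S \<union> (\<Lambda> \<union> \<Theta>))"
    and agree: "\<And>G. G \<in> ?S \<Longrightarrow> rename f g' G = rename f g G"
    using obtain_fresh_renaming_pvar[OF all2R.prems(2) _ _ all2R.hyps(2)] deriv_finite[OF all2R.hyps(1)]
      all2R.prems(3,4) by (metis finite_Un finite_insert)
  have "rename f g' F = rename f g F" "rename f g' ` \<Gamma> = rename f g ` \<Gamma>"
    "rename f g' ` \<Delta> = rename f g ` \<Delta>"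
    using agree[of "FAll2 n F"] agree by (auto intro: image_cong)
  moreover have "deriv (rename f g' ` \<Gamma> \<union> \<Lambda>)
      (rename f g' ` insert (open2 0 (pvar_abs X n) F) (insert (FAll2 n F) \<Delta>) \<union> \<Theta>)"
    using all2R.IH g'(1) all2R.prems(1,3,4) by blast
  moreover have "(g' n X, n) \<notin> fpvs ((rename f g ` \<Gamma> \<union> \<Lambda>) \<union> insert (FAll2 n (rename f g F)) (rename f g ` \<Delta> \<union> \<Theta>))"
    using g'(2) by (auto simp: fpvs_def)
  ultimately show ?case by (simp add: rename_open2 rename_pvar_abs deriv.all2R)
next
  case (exR t \<Gamma> F \<Delta>)
  then show ?case
    using deriv.exR[of "rename_tm f t"] by (auto simp: rename_open1 Tm0_def)
next
  case (allL t F \<Gamma> \<Delta>)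
  then show ?case
    using deriv.allL[of "rename_tm f t"] by (auto simp: rename_open1 Tm0_def)
next
  case (ex2R T n \<Gamma> F \<Delta>)
  then show ?case
    using deriv.ex2R[of "rename f g T"] by (auto simp: rename_open2 Abs_def)
next
  case (all2L T n F \<Gamma> \<Delta>)
  then show ?case
    using deriv.all2L[of "rename f g T"] by (auto simp: rename_open2 Abs_def)
qed (auto intro: deriv.intros)

lemma deriv_mono:
  assumes "deriv \<Gamma> \<Delta>" "\<Gamma> \<subseteq> \<Gamma>'" "\<Delta> \<subseteq> \<Delta>'" "finite \<Gamma>'" "finite \<Delta>'"
  shows "deriv \<Gamma>' \<Delta>'"
  using deriv_rename_weaken[OF assms(1), of id "\<lambda>_. id" \<Gamma>' \<Delta>'] assms(2-5)
  by (simp add: rename_id Un_absorb1)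

lemma deriv_insertL: "deriv \<Gamma> \<Delta> \<Longrightarrow> deriv (insert A \<Gamma>) \<Delta>"
  by (frule deriv_finite, erule deriv_mono) auto

lemma deriv_insertR: "deriv \<Gamma> \<Delta> \<Longrightarrow> deriv \<Gamma> (insert A \<Delta>)"
  by (frule deriv_finite, erule deriv_mono) auto

lemma deriv_insertL2: "deriv (insert A \<Gamma>) \<Delta> \<Longrightarrow> deriv (insert A (insert B \<Gamma>)) \<Delta>"
  by (subst insert_commute) (rule deriv_insertL)

lemma deriv_insertR2: "deriv \<Gamma> (insert A \<Delta>) \<Longrightarrow> deriv \<Gamma> (insert A (insert B \<Delta>))"
  by (subst insert_commute) (rule deriv_insertR)

lemma negL': "deriv \<Gamma> (insert F \<Delta>) \<Longrightarrow> deriv (insert (FNeg F) \<Gamma>) \<Delta>"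
  by (rule deriv.negL; erule deriv_insertL)

lemma negR': "deriv (insert F \<Gamma>) \<Delta> \<Longrightarrow> deriv \<Gamma> (insert (FNeg F) \<Delta>)"
  by (rule deriv.negR; erule deriv_insertR)

lemma orL': "deriv (insert F0 \<Gamma>) \<Delta> \<Longrightarrow> deriv (insert F1 \<Gamma>) \<Delta> \<Longrightarrow> deriv (insert (FOr F0 F1) \<Gamma>) \<Delta>"
  by (rule deriv.orL; erule deriv_insertL2)

lemma orR0': "deriv \<Gamma> (insert F0 \<Delta>) \<Longrightarrow> deriv \<Gamma> (insert (FOr F0 F1) \<Delta>)"
  by (rule deriv.orR0; erule deriv_insertR2)

lemma orR1': "deriv \<Gamma> (insert F1 \<Delta>) \<Longrightarrow> deriv \<Gamma> (insert (FOr F0 F1) \<Delta>)"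
  by (rule deriv.orR1; erule deriv_insertR2)

lemma andL0': "deriv (insert F0 \<Gamma>) \<Delta> \<Longrightarrow> deriv (insert (FAnd F0 F1) \<Gamma>) \<Delta>"
  by (rule deriv.andL0; erule deriv_insertL2)

lemma andL1': "deriv (insert F1 \<Gamma>) \<Delta> \<Longrightarrow> deriv (insert (FAnd F0 F1) \<Gamma>) \<Delta>"
  by (rule deriv.andL1; erule deriv_insertL2)

lemma andR': "deriv \<Gamma> (insert F0 \<Delta>) \<Longrightarrow> deriv \<Gamma> (insert F1 \<Delta>) \<Longrightarrow> deriv \<Gamma> (insert (FAnd F0 F1) \<Delta>)"
  by (rule deriv.andR; erule deriv_insertR2)

lemma exR': "t \<in> Tm0 \<Longrightarrow> deriv \<Gamma> (insert (open1 0 t F) \<Delta>) \<Longrightarrow> deriv \<Gamma> (insert (FEx F) \<Delta>)"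
  by (erule deriv.exR, erule deriv_insertR2)

lemma allL': "t \<in> Tm0 \<Longrightarrow> deriv (insert (open1 0 t F) \<Gamma>) \<Delta> \<Longrightarrow> deriv (insert (FAll F) \<Gamma>) \<Delta>"
  by (erule deriv.allL, erule deriv_insertL2)

lemma ex2R': "T \<in> Abs n \<Longrightarrow> deriv \<Gamma> (insert (open2 0 T F) \<Delta>) \<Longrightarrow> deriv \<Gamma> (insert (FEx2 n F) \<Delta>)"
  by (erule deriv.ex2R, erule deriv_insertR2)

lemma all2L': "T \<in> Abs n \<Longrightarrow> deriv (insert (open2 0 T F) \<Gamma>) \<Delta> \<Longrightarrow> deriv (insert (FAll2 n F) \<Gamma>) \<Delta>"
  by (erule deriv.all2L, erule deriv_insertL2)

lemma FV_in_Tm0: "FV a \<in> Tm0"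
  by (simp add: Tm0_def)

lemma pvar_abs_in_Abs: "pvar_abs X n \<in> Abs n"
  by (simp add: Abs_def pvar_abs_def)

lemma exL':
  assumes "\<And>t. t \<in> Tm0 \<Longrightarrow> deriv (insert (open1 0 t F) \<Gamma>) \<Delta>"
  shows "deriv (insert (FEx F) \<Gamma>) \<Delta>"
proof -
  have "finite (insert (FEx F) \<Gamma> \<union> \<Delta>)"
    using deriv_finite[OF assms[OF FV_in_Tm0]] by simp
  then obtain a where fresh: "a \<notin> fvs (insert (FEx F) \<Gamma> \<union> \<Delta>)"
    using ex_fresh_var by blast
  have "deriv (insert (open1 0 (FV a) F) (insert (FEx F) \<Gamma>)) \<Delta>"
    using assms[OF FV_in_Tm0] by (rule deriv_insertL2)
  then show ?thesis using fresh by (rule deriv.exL)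
qed

lemma allR':
  assumes "\<And>t. t \<in> Tm0 \<Longrightarrow> deriv \<Gamma> (insert (open1 0 t F) \<Delta>)"
  shows "deriv \<Gamma> (insert (FAll F) \<Delta>)"
proof -
  have "finite (\<Gamma> \<union> insert (FAll F) \<Delta>)"
    using deriv_finite[OF assms[OF FV_in_Tm0]] by simp
  then obtain a where fresh: "a \<notin> fvs (\<Gamma> \<union> insert (FAll F) \<Delta>)"
    using ex_fresh_var by blast
  have "deriv \<Gamma> (insert (open1 0 (FV a) F) (insert (FAll F) \<Delta>))"
    using assms[OF FV_in_Tm0] by (rule deriv_insertR2)
  then show ?thesis using fresh by (rule deriv.allR)
qed

lemma ex2L':
  assumes "\<And>T. T \<in> Abs n \<Longrightarrow> deriv (insert (open2 0 T F) \<Gamma>) \<Delta>"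
  shows "deriv (insert (FEx2 n F) \<Gamma>) \<Delta>"
proof -
  have "finite (insert (FEx2 n F) \<Gamma> \<union> \<Delta>)"
    using deriv_finite[OF assms[OF pvar_abs_in_Abs]] by simp
  then obtain X where fresh: "(X, n) \<notin> fpvs (insert (FEx2 n F) \<Gamma> \<union> \<Delta>)"
    using ex_fresh_pvar by blast
  have "deriv (insert (open2 0 (pvar_abs X n) F) (insert (FEx2 n F) \<Gamma>)) \<Delta>"
    using assms[OF pvar_abs_in_Abs] by (rule deriv_insertL2)
  then show ?thesis using fresh by (rule deriv.ex2L)
qed

lemma all2R':
  assumes "\<And>T. T \<in> Abs n \<Longrightarrow> deriv \<Gamma> (insert (open2 0 T F) \<Delta>)"
  shows "deriv \<Gamma> (insert (FAll2 n F) \<Delta>)"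
proof -
  have "finite (\<Gamma> \<union> insert (FAll2 n F) \<Delta>)"
    using deriv_finite[OF assms[OF pvar_abs_in_Abs]] by simp
  then obtain X where fresh: "(X, n) \<notin> fpvs (\<Gamma> \<union> insert (FAll2 n F) \<Delta>)"
    using ex_fresh_pvar by blast
  have "deriv \<Gamma> (insert (open2 0 (pvar_abs X n) F) (insert (FAll2 n F) \<Delta>))"
    using assms[OF pvar_abs_in_Abs] by (rule deriv_insertR2)
  then show ?thesis using fresh by (rule deriv.all2R)
qed

fun fsize :: "fm \<Rightarrow> nat" where
  "fsize (FAtom p ts) = 1"
| "fsize (FNeg F) = Suc (fsize F)"
| "fsize (FOr F G) = Suc (fsize F + fsize G)"
| "fsize (FAnd F G) = Suc (fsize F + fsize G)"
| "fsize (FEx F) = Suc (fsize F)"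
| "fsize (FAll F) = Suc (fsize F)"
| "fsize (FEx2 n F) = Suc (fsize F)"
| "fsize (FAll2 n F) = Suc (fsize F)"

lemma fsize_open1 [simp]: "fsize (open1 k t F) = fsize F"
  by (induction F arbitrary: k) auto

lemma fsize_open2_pvar_abs [simp]: "fsize (open2 k (pvar_abs X n) F) = fsize F"
  by (induction k "pvar_abs X n" F rule: open2.induct) (auto simp: pvar_abs_def)

text \<open>Arbitrary second-order instances may be larger than the quantified formula, so the
  second-order cases go through a fresh eigenvariable.\<close>
lemma deriv_identity: "finite \<Gamma> \<Longrightarrow> finite \<Delta> \<Longrightarrow> deriv (insert A \<Gamma>) (insert A \<Delta>)"
proof (induction "fsize A" arbitrary: A \<Gamma> \<Delta> rule: less_induct)
  case less
  show ?case
  proof (cases A)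
    case (FAtom p ts)
    then show ?thesis using less.prems by (simp add: deriv.init)
  next
    case (FNeg F)
    have "deriv (insert F \<Gamma>) (insert F \<Delta>)"
      by (rule less.hyps) (simp_all add: FNeg less.prems)
    then have "deriv \<Gamma> (insert (FNeg F) (insert F \<Delta>))"
      by (rule negR')
    then have "deriv \<Gamma> (insert F (insert A \<Delta>))"
      by (simp add: FNeg insert_commute)
    then show ?thesis unfolding FNeg by (rule negL')
  next
    case (FOr F0 F1)
    have "deriv (insert F0 \<Gamma>) (insert F0 \<Delta>)"
      by (rule less.hyps) (simp_all add: FOr less.prems)
    then have "deriv (insert F0 \<Gamma>) (insert A \<Delta>)"
      unfolding FOr by (rule orR0')
    moreover have "deriv (insert F1 \<Gamma>) (insert F1 \<Delta>)"
      by (rule less.hyps) (simp_all add: FOr less.prems)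
    then have "deriv (insert F1 \<Gamma>) (insert A \<Delta>)"
      unfolding FOr by (rule orR1')
    ultimately show ?thesis unfolding FOr by (rule orL')
  next
    case (FAnd F0 F1)
    have "deriv (insert F0 \<Gamma>) (insert F0 \<Delta>)"
      by (rule less.hyps) (simp_all add: FAnd less.prems)
    then have "deriv (insert A \<Gamma>) (insert F0 \<Delta>)"
      unfolding FAnd by (rule andL0')
    moreover have "deriv (insert F1 \<Gamma>) (insert F1 \<Delta>)"
      by (rule less.hyps) (simp_all add: FAnd less.prems)
    then have "deriv (insert A \<Gamma>) (insert F1 \<Delta>)"
      unfolding FAnd by (rule andL1')
    ultimately show ?thesis unfolding FAnd by (rule andR')
  next
    case (FEx F)
    have "deriv (insert (open1 0 t F) \<Gamma>) (insert (open1 0 t F) \<Delta>)" for t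
      by (rule less.hyps) (simp_all add: FEx less.prems)
    then have "deriv (insert (open1 0 t F) \<Gamma>) (insert A \<Delta>)" if "t \<in> Tm0" for t
      unfolding FEx by (rule exR'[OF that])
    then show ?thesis unfolding FEx by (rule exL')
  next
    case (FAll F)
    have "deriv (insert (open1 0 t F) \<Gamma>) (insert (open1 0 t F) \<Delta>)" for t
      by (rule less.hyps) (simp_all add: FAll less.prems)
    then have "deriv (insert A \<Gamma>) (insert (open1 0 t F) \<Delta>)" if "t \<in> Tm0" for t
      unfolding FAll by (rule allL'[OF that])
    then show ?thesis unfolding FAll by (rule allR')
  next
    case (FEx2 n F)
    obtain X where X: "(X, n) \<notin> fpvs (insert A \<Gamma> \<union> insert A \<Delta>)"
      using ex_fresh_pvar less.prems by (meson finite_Un finite_insert)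
    let ?P = "open2 0 (pvar_abs X n) F"
    have "deriv (insert ?P (insert A \<Gamma>)) (insert ?P \<Delta>)"
      by (rule less.hyps) (simp_all add: FEx2 less.prems)
    then have "deriv (insert ?P (insert A \<Gamma>)) (insert A \<Delta>)"
      unfolding FEx2 by (rule ex2R'[OF pvar_abs_in_Abs])
    then show ?thesis using X unfolding FEx2 by (rule deriv.ex2L)
  next
    case (FAll2 n F)
    obtain X where X: "(X, n) \<notin> fpvs (insert A \<Gamma> \<union> insert A \<Delta>)"
      using ex_fresh_pvar less.prems by (meson finite_Un finite_insert)
    let ?P = "open2 0 (pvar_abs X n) F"
    have "deriv (insert ?P \<Gamma>) (insert ?P (insert A \<Delta>))"
      by (rule less.hyps) (simp_all add: FAll2 less.prems)
    then have "deriv (insert A \<Gamma>) (insert ?P (insert A \<Delta>))"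
      unfolding FAll2 by (rule all2L'[OF pvar_abs_in_Abs])
    then show ?thesis using X unfolding FAll2 by (rule deriv.all2R)
  qed
qed

lemma wf_open1: "wf (Suc k) as F \<Longrightarrow> tm_wf k t \<Longrightarrow> wf k as (open1 k t F)"
proof (induction F arbitrary: k as)
  case (FAtom p ts)
  have "tm_wf k (open_tm k t u)" if "u \<in> set ts" for u
    using FAtom that by (cases p; cases u) auto
  then show ?case using FAtom by (cases p) auto
next
  case (FEx F)
  then show ?case by (cases t) auto
next
  case (FAll F)
  then show ?case by (cases t) auto
qed auto

lemma wf_append: "wf k as G \<Longrightarrow> wf k (as @ bs) G"
  by (induction k as G rule: wf.induct) (auto simp: nth_append)

lemma wf_inst: "wf (d + length ts) as G \<Longrightarrow> \<forall>t\<in>set ts. tm_wf k t \<Longrightarrow> wf (d + k) as (inst d ts G)"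
proof (induction G arbitrary: d as)
  case (FAtom p us)
  have shift: "tm_wf (d + k) (shift_tm d t)" if "tm_wf k t" for t
    using that by (cases t) auto
  have "tm_wf (d + k) (inst_tm d ts u)" if "u \<in> set us" for u
    using FAtom that by (cases p; cases u) (auto intro!: shift)
  then show ?case using FAtom by (cases p) auto
next
  case (FEx G)
  then show ?case using FEx.IH[of "Suc d"] by simp
next
  case (FAll G)
  then show ?case using FAll.IH[of "Suc d"] by simp
qed auto

lemma wf_open2: "wf k (bs @ [n]) F \<Longrightarrow> wf n [] G \<Longrightarrow> wf k bs (open2 (length bs) G F)"
proof (induction "length bs" G F arbitrary: k bs rule: open2.induct)
  case (1 G i ts)
  show ?case
  proof (cases "i = length bs")
    case True
    have "wf (0 + length ts) bs G"
      using 1 True wf_append[of n "[]" G bs] by (simp add: nth_append)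
    then have "wf (0 + k) bs (inst 0 ts G)"
      by (rule wf_inst) (use 1 in simp)
    then show ?thesis using True by simp
  next
    case False
    then show ?thesis using 1 by (auto simp: nth_append)
  qed
next
  case (8 G n' F)
  then show ?case using "8.hyps"[of "n' # bs"] by simp
next
  case (9 G n' F)
  then show ?case using "9.hyps"[of "n' # bs"] by simp
qed auto

lemma open1_in_Fm: "wf (Suc 0) [] F \<Longrightarrow> t \<in> Tm0 \<Longrightarrow> open1 0 t F \<in> Fm"
  by (auto simp: Fm_def Tm0_def intro!: wf_open1)

lemma open2_in_Fm: "wf 0 [n] F \<Longrightarrow> T \<in> Abs n \<Longrightarrow> open2 0 T F \<in> Fm"
  using wf_open2[of 0 "[]" n F T] by (simp add: Fm_def Abs_def)

lemma seqm_subset_seqM_iff: "x \<in> Seqs \<Longrightarrow> y \<in> Seqs \<Longrightarrow> seqm y \<subseteq> seqM x \<longleftrightarrow> y \<in> seqM x"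
  unfolding seqm_def by blast

lemma self_in_seqm: "y \<in> Seqs \<Longrightarrow> y \<in> seqm y"
  unfolding seqm_def by blast

lemma seqm_in_BS: "y \<in> Seqs \<Longrightarrow> seqm y \<in> BS"
  unfolding BS_def seqm_def by blast

lemma seqM_subset_Seqs: "seqM x \<subseteq> Seqs"
  by (auto simp: seqM_def)

lemma seqM_in_BS: "x \<in> Seqs \<Longrightarrow> seqM x \<in> BS"
  unfolding BS_def using seqM_subset_Seqs by blast

lemma BS_memI:
  assumes "\<gamma> \<in> BS" "z \<in> Seqs" "\<And>x. x \<in> Seqs \<Longrightarrow> \<gamma> \<subseteq> seqM x \<Longrightarrow> z \<in> seqM x"
  shows "z \<in> \<gamma>"
proof -
  have "\<gamma> = Seqs \<inter> \<Inter>{seqM x |x. x \<in> Seqs \<and> \<gamma> \<subseteq> seqM x}"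
    using assms(1) unfolding BS_def by blast
  also have "z \<in> \<dots>"
    using assms(2,3) by blast
  finally show ?thesis .
qed

lemma left_in_Seqs: "({C}, {}) \<in> Seqs \<longleftrightarrow> C \<in> Fm"
  by (simp add: Seqs_def)

lemma right_in_Seqs: "({}, {C}) \<in> Seqs \<longleftrightarrow> C \<in> Fm"
  by (simp add: Seqs_def)

lemma seqm_left_subset_seqM_iff:
  "C \<in> Fm \<Longrightarrow> x \<in> Seqs \<Longrightarrow> seqm ({C}, {}) \<subseteq> seqM x \<longleftrightarrow> deriv (insert C (fst x)) (snd x)"
  by (subst seqm_subset_seqM_iff) (simp_all add: left_in_Seqs seqM_def)

lemma in_seqM_left_iff: "y \<in> seqM ({C}, {}) \<longleftrightarrow> y \<in> Seqs \<and> deriv (insert C (fst y)) (snd y)"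
  by (simp add: seqM_def)

lemma in_seqM_right_iff: "y \<in> seqM ({}, {C}) \<longleftrightarrow> y \<in> Seqs \<and> deriv (fst y) (insert C (snd y))"
  by (simp add: seqM_def)

lemma Seqs_finite: "x \<in> Seqs \<Longrightarrow> finite (fst x) \<and> finite (snd x)"
  by (auto simp: Seqs_def)

definition Vseq :: "fm \<Rightarrow> seq set \<times> seq set" where
  "Vseq A = (seqm ({A}, {}), seqM ({}, {A}))"

lemma Vseq_in_DBS: "A \<in> Fm \<Longrightarrow> Vseq A \<in> DBS"
  using deriv_identity[of "{}" "{}" A]
  by (simp add: Vseq_def DBS_def seqm_in_BS seqM_in_BS left_in_Seqs right_in_Seqs
      seqm_left_subset_seqM_iff)

lemma Vseq_le_dneg:
  assumes "F \<in> Fm"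
  shows "dle (Vseq (FNeg F)) (dneg (Vseq F))"
proof -
  have "FNeg F \<in> Fm" using assms by (simp add: Fm_def)
  have "seqm ({FNeg F}, {}) \<subseteq> seqM x" if "x \<in> seqM ({}, {F})" for x
    using that \<open>FNeg F \<in> Fm\<close> by (simp add: in_seqM_right_iff seqm_left_subset_seqM_iff negL')
  then have "seqm ({FNeg F}, {}) \<subseteq> negB (seqM ({}, {F}))"
    unfolding negB_def seqm_def by blast
  moreover have "y \<in> seqM ({F}, {})" if "y \<in> negB (seqm ({F}, {}))" for y
    using that self_in_seqm[of "({F}, {})"] assms unfolding negB_def by (auto simp: left_in_Seqs)
  then have "negB (seqm ({F}, {})) \<subseteq> seqM ({}, {FNeg F})"
    by (auto simp: in_seqM_left_iff in_seqM_right_iff negR')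
  ultimately show ?thesis
    by (simp add: dle_def dneg_def Vseq_def)
qed

lemma Vseq_le_dsup:
  assumes "C \<in> Fm" "I \<subseteq> Fm"
    and left: "\<And>\<Gamma> \<Delta>. finite \<Gamma> \<Longrightarrow> finite \<Delta> \<Longrightarrow> (\<And>D. D \<in> I \<Longrightarrow> deriv (insert D \<Gamma>) \<Delta>) \<Longrightarrow>
      deriv (insert C \<Gamma>) \<Delta>"
    and right: "\<And>\<Gamma> \<Delta> D. D \<in> I \<Longrightarrow> deriv \<Gamma> (insert D \<Delta>) \<Longrightarrow> deriv \<Gamma> (insert C \<Delta>)"
  shows "dle (Vseq C) (dsup (Vseq ` I))"
proof -
  have "z \<in> supB (fst ` Vseq ` I)" if z: "z \<in> seqm ({C}, {})" for z
  proof -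
    have "z \<in> Seqs" using z by (simp add: seqm_def)
    moreover have "z \<in> \<gamma>" if \<gamma>: "\<gamma> \<in> BS" "\<Union>(fst ` Vseq ` I) \<subseteq> \<gamma>" for \<gamma>
    proof (rule BS_memI[OF \<gamma>(1) \<open>z \<in> Seqs\<close>])
      fix x assume x: "x \<in> Seqs" "\<gamma> \<subseteq> seqM x"
      have "deriv (insert D (fst x)) (snd x)" if "D \<in> I" for D
      proof -
        have "seqm ({D}, {}) \<subseteq> seqM x"
          using that \<gamma>(2) x(2) by (auto simp: Vseq_def)
        then show ?thesis
          using that x(1) assms(2) seqm_left_subset_seqM_iff by blast
      qed
      then have "deriv (insert C (fst x)) (snd x)"
        using Seqs_finite[OF x(1)] by (intro left) auto
      then show "z \<in> seqM x"
        using z x(1) assms(1) seqm_left_subset_seqM_iff by blast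
    qed
    ultimately show ?thesis
      unfolding supB_def by blast
  qed
  moreover have "seqM ({}, {D}) \<subseteq> seqM ({}, {C})" if "D \<in> I" for D
    using that right by (auto simp: in_seqM_right_iff)
  then have "\<Union>(snd ` Vseq ` I) \<subseteq> seqM ({}, {C})"
    by (auto simp: Vseq_def)
  then have "supB (snd ` Vseq ` I) \<subseteq> seqM ({}, {C})"
    using seqM_in_BS[of "({}, {C})"] assms(1) unfolding supB_def
    by (auto simp: right_in_Seqs)
  ultimately show ?thesis
    by (auto simp: dle_def dsup_def Vseq_def)
qed

lemma Vseq_le_dinf:
  assumes "C \<in> Fm"
    and left: "\<And>\<Gamma> \<Delta> D. D \<in> I \<Longrightarrow> deriv (insert D \<Gamma>) \<Delta> \<Longrightarrow> deriv (insert C \<Gamma>) \<Delta>"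
    and right: "\<And>\<Gamma> \<Delta>. finite \<Gamma> \<Longrightarrow> finite \<Delta> \<Longrightarrow> (\<And>D. D \<in> I \<Longrightarrow> deriv \<Gamma> (insert D \<Delta>)) \<Longrightarrow>
      deriv \<Gamma> (insert C \<Delta>)"
  shows "dle (Vseq C) (dinf (Vseq ` I))"
proof -
  have "seqm ({C}, {}) \<subseteq> seqm ({D}, {})" if "D \<in> I" for D
  proof -
    have "seqm ({C}, {}) \<subseteq> seqM x" if "x \<in> Seqs" "({D}, {}) \<in> seqM x" for x
    proof -
      have "deriv (insert C (fst x)) (snd x)"
        using that(2) left[OF \<open>D \<in> I\<close>] by (simp add: seqM_def)
      then show ?thesis
        using that(1) assms(1) seqm_left_subset_seqM_iff by blast
    qed
    then show ?thesis
      unfolding seqm_def[of "({D}, {})"] using seqm_def by blast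
  qed
  then have "seqm ({C}, {}) \<subseteq> infB (fst ` Vseq ` I)"
    unfolding infB_def seqm_def[of "({C}, {})"] by (auto simp: Vseq_def)
  moreover have "infB (snd ` Vseq ` I) \<subseteq> seqM ({}, {C})"
    using right Seqs_finite unfolding infB_def by (auto simp: Vseq_def in_seqM_right_iff)
  ultimately show ?thesis
    by (simp add: dle_def dinf_def Vseq_def)
qed

lemma Vseq_FOr: "FOr F0 F1 \<in> Fm \<Longrightarrow> dle (Vseq (FOr F0 F1)) (dsup {Vseq F0, Vseq F1})"
  using Vseq_le_dsup[of "FOr F0 F1" "{F0, F1}"]
  by (auto simp: Fm_def intro: orL' orR0' orR1')

lemma Vseq_FAnd: "FAnd F0 F1 \<in> Fm \<Longrightarrow> dle (Vseq (FAnd F0 F1)) (dinf {Vseq F0, Vseq F1})"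
  using Vseq_le_dinf[of "FAnd F0 F1" "{F0, F1}"]
  by (auto intro: andL0' andL1' andR')

lemma Vseq_FEx:
  assumes "FEx F \<in> Fm"
  shows "dle (Vseq (FEx F)) (dsup {Vseq (open1 0 t F) |t. t \<in> Tm0})"
proof -
  have "wf (Suc 0) [] F" using assms by (simp add: Fm_def)
  then have "dle (Vseq (FEx F)) (dsup (Vseq ` (\<lambda>t. open1 0 t F) ` Tm0))"
    using assms by (intro Vseq_le_dsup) (auto simp: open1_in_Fm intro: exL' exR')
  then show ?thesis by (simp add: Setcompr_eq_image image_image)
qed

lemma Vseq_FAll:
  "FAll F \<in> Fm \<Longrightarrow> dle (Vseq (FAll F)) (dinf {Vseq (open1 0 t F) |t. t \<in> Tm0})"
  using Vseq_le_dinf[of "FAll F" "(\<lambda>t. open1 0 t F) ` Tm0"]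
  by (auto simp: Setcompr_eq_image image_image intro: allL' allR')

lemma Vseq_FEx2:
  assumes "FEx2 n F \<in> Fm"
  shows "dle (Vseq (FEx2 n F)) (dsup {Vseq (open2 0 T F) |T. T \<in> Abs n})"
proof -
  have "wf 0 [n] F" using assms by (simp add: Fm_def)
  then have "dle (Vseq (FEx2 n F)) (dsup (Vseq ` (\<lambda>T. open2 0 T F) ` Abs n))"
    using assms by (intro Vseq_le_dsup) (auto simp: open2_in_Fm intro: ex2L' ex2R')
  then show ?thesis by (simp add: Setcompr_eq_image image_image)
qed

lemma Vseq_FAll2:
  "FAll2 n F \<in> Fm \<Longrightarrow> dle (Vseq (FAll2 n F)) (dinf {Vseq (open2 0 T F) |T. T \<in> Abs n})"
  using Vseq_le_dinf[of "FAll2 n F" "(\<lambda>T. open2 0 T F) ` Abs n"]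
  by (auto simp: Setcompr_eq_image image_image intro: all2L' all2R')

lemma semi_valuation_Vseq: "semi_valuation Vseq"
  unfolding semi_valuation_def
  using Vseq_in_DBS Vseq_le_dneg Vseq_FOr Vseq_FAnd Vseq_FEx Vseq_FAll Vseq_FEx2 Vseq_FAll2
  by (auto simp: Fm_def)

theorem mainTheorem12:
  shows "(\<forall>A\<in>Fm. seqm ({A}, {}) \<in> BS \<and> seqM ({}, {A}) \<in> BS
                \<and> seqm ({A}, {}) \<subseteq> seqM ({}, {A}))
       \<and> semi_valuation (\<lambda>A. (seqm ({A}, {}), seqM ({}, {A})))"
proof
  show "\<forall>A\<in>Fm. seqm ({A}, {}) \<in> BS \<and> seqM ({}, {A}) \<in> BS \<and> seqm ({A}, {}) \<subseteq> seqM ({}, {A})"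
    using Vseq_in_DBS by (simp add: Vseq_def DBS_def)
  show "semi_valuation (\<lambda>A. (seqm ({A}, {}), seqM ({}, {A})))"
    using semi_valuation_Vseq by (simp add: Vseq_def [abs_def])
qed

end
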